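(* In the multi-parameter setting described in the context, suppose $p_j(\theta)>0$ for all $j$ and all $\theta\in\Theta$. Then $H_\theta=C_\Upsilon(\theta)$ for all $\theta\in\Theta$ if and only if the channel is quasi-classical, i.e. the vectors $|w_k(\theta)\rangle$ do not depend on $\theta$.
   Context: Let $\Theta\subseteq\mathbb{R}^p$ be open (and connected) and $D\ge1$. For $\theta\in\Theta$ let $\Phi_\theta$ be a quantum channel on $D\times D$ complex matrices and $\rho_0=|\psi_0\rangle\langle\psi_0|$ a fixed pure input state. Canonical Kraus operators are $D\times D$ matrices $\Upsilon_1(\theta),\dots,\Upsilon_D(\theta)$, differentiable in $\theta$, with $\sum_k\Upsilon_k^\dagger\Upsilon_k=\mathbb{I}$, $\Phi_\theta(\rho)=\sum_k\Upsilon_k\rho\Upsilon_k^\dagger$, and $\mathrm{tr}\{\Upsilon_k\rho_0\Upsilon_j^\dagger\}=\delta_{jk}p_k(\theta)$. Write $\Upsilon_k(\theta)|\psi_0\rangle=\sqrt{p_k(\theta)}|w_k(\theta)\rangle$ with $\{|w_k(\theta)\rangle\}$ an orthonormal basis of $\mathbb{C}^D$ differentiable in $\theta$; the output is $\rho_\theta=\sum_kp_k|w_k\rangle\langle w_k|$. $C_\Upsilon(\theta)$ is the $p\times p$ matrix with entries $4\sum_l\mathrm{Re}\,\mathrm{tr}\{\frac{\partial\Upsilon_l}{\partial\theta^j}\rho_0(\frac{\partial\Upsilon_l}{\partial\theta^k})^\dagger\}$ and $H_\theta$ the SLD quantum information matrix with entries $\mathrm{Re}\,\mathrm{tr}\{\lambda^j\rho_\theta\lambda^k\}$,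 $\lambda^j$ Hermitian with $\frac{\partial\rho_\theta}{\partial\theta^j}=\frac12(\rho_\theta\lambda^j+\lambda^j\rho_\theta)$. *)

theory Defs
  imports "HOL-Analysis.Analysis"
begin

(* D x D complex matrices are complex^'d^'d with D = CARD('d); the parameter
   space R^p is real^'p with p = CARD('p). *)

definition adj :: "complex^'d^'d \<Rightarrow> complex^'d^'d" where
  "adj A = (\<chi> i j. cnj (A $ j $ i))"

definition hermitian :: "complex^'d^'d \<Rightarrow> bool" where
  "hermitian A \<longleftrightarrow> adj A = A"

definition ketbra :: "complex^'d \<Rightarrow> complex^'d \<Rightarrow> complex^'d^'d" where
  "ketbra x y = (\<chi> i j. x $ i * cnj (y $ j))"

definition braket :: "complex^'d \<Rightarrow> complex^'d \<Rightarrow> complex" where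
  "braket x y = (\<Sum>i\<in>UNIV. cnj (x $ i) * y $ i)"

definition pderiv :: "(real^'p \<Rightarrow> 'b::real_normed_vector) \<Rightarrow> real^'p \<Rightarrow> 'p \<Rightarrow> 'b" where
  "pderiv f \<theta> j = frechet_derivative f (at \<theta>) (axis j 1)"

definition channel_out ::
  "('d \<Rightarrow> real^'p \<Rightarrow> complex^'d^'d) \<Rightarrow> complex^'d^'d \<Rightarrow> real^'p \<Rightarrow> complex^'d^'d" where
  "channel_out Ups rho0 \<theta> = (\<Sum>k\<in>UNIV. Ups k \<theta> ** rho0 ** adj (Ups k \<theta>))"

definition is_SLD :: "complex^'d^'d \<Rightarrow> complex^'d^'d \<Rightarrow> complex^'d^'d \<Rightarrow> bool" where
  "is_SLD rho drho L \<longleftrightarrow> hermitian L \<and> drho = (1/2::real) *\<^sub>R (rho ** L + L ** rho)"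

definition SLD_QFI :: "(real^'p \<Rightarrow> complex^'d^'d) \<Rightarrow> real^'p \<Rightarrow> real^'p^'p" where
  "SLD_QFI rho \<theta> =
     (let L = (\<lambda>j. SOME L. is_SLD (rho \<theta>) (pderiv rho \<theta> j) L)
      in \<chi> j k. Re (trace (L j ** rho \<theta> ** L k)))"

definition C_Ups ::
  "('d \<Rightarrow> real^'p \<Rightarrow> complex^'d^'d) \<Rightarrow> complex^'d^'d \<Rightarrow> real^'p \<Rightarrow> real^'p^'p" where
  "C_Ups Ups rho0 \<theta> =
     (\<chi> j k. 4 * (\<Sum>l\<in>UNIV. Re (trace (pderiv (Ups l) \<theta> j ** rho0 ** adj (pderiv (Ups l) \<theta> k)))))"

end

(*
  Fix \<theta> and a direction j, and put v_l = \<Upsilon>_l \<psi>_0 = sqrt(p_l) w_l and a_l = \<partial>_j \<Upsilon>_l \<psi>_0, so that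
  \<rho> = \<Sum>_l |v_l><v_l| and \<partial>_j \<rho> = \<Sum>_l (|a_l><v_l| + |v_l><a_l|).  Completing the square with the
  SLD equation gives (C_\<Upsilon>)_jj - H_jj = \<Sum>_l ||\<lambda>^j v_l - 2 a_l||^2, so the diagonal entries agree
  iff \<lambda>^j v_l = 2 a_l for all l.  As \<rho> is faithful, this holds iff the matrix <v_m|a_l> is
  Hermitian.  Differentiating <w_m|w_l> = \<delta>_ml and the reality of <w_l|v_l> shows that
  <v_m|a_l> is a real diagonal matrix plus -sqrt(p_m p_l) <\<partial>_j w_m|w_l>, with the latter
  anti-Hermitian; so it is Hermitian iff \<partial>_j w_l = 0 for all l.
  Hence H = C_\<Upsilon> on \<Theta> forces all partial derivatives of the w_l to vanish, and the w_l are
  constant on the connected open set \<Theta>.  Conversely, constant w_l give \<lambda>^j v_l = 2 a_l for every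
  j, and then H_jk = Re \<Sum>_l <\<lambda>^k v_l|\<lambda>^j v_l> = (C_\<Upsilon>)_jk.
*)

theory Submission
  imports Defs
begin

lemma scaleR_complex: "c *\<^sub>R (z::complex) = of_real c * z"
  by (fact scaleR_conv_of_real)

lemma adj_adj [simp]: "adj (adj A) = A"
  by (simp add: adj_def vec_eq_iff)

lemma adj_add: "adj (A + B) = adj A + adj B"
  by (simp add: adj_def vec_eq_iff)

lemma adj_sum: "adj (sum f S) = (\<Sum>x\<in>S. adj (f x))"
  by (induction S rule: infinite_finite_induct) (auto simp: adj_def vec_eq_iff)

lemma braket_adj: "braket x (A *v y) = braket (adj A *v x) y"
proof -
  have "braket x (A *v y) = (\<Sum>i\<in>UNIV. \<Sum>j\<in>UNIV. cnj (x$i) * A$i$j * y$j)"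
    by (simp add: braket_def matrix_vector_mult_def sum_distrib_left mult_ac)
  also have "\<dots> = (\<Sum>j\<in>UNIV. \<Sum>i\<in>UNIV. cnj (x$i) * A$i$j * y$j)"
    by (rule sum.swap)
  also have "\<dots> = braket (adj A *v x) y"
    unfolding braket_def adj_def matrix_vector_mult_def
    by (simp add: sum_distrib_right sum_distrib_left mult.commute mult.left_commute)
  finally show ?thesis .
qed

lemma braket_hermitian: "adj A = A \<Longrightarrow> braket (A *v x) y = braket x (A *v y)"
  by (metis braket_adj)

lemma ketbra_mult_vec: "ketbra x y *v z = braket y z *s x"
  by (simp add: ketbra_def braket_def matrix_vector_mult_def vec_eq_iff sum_distrib_left mult_ac)

lemma mat_ketbra: "A ** ketbra x y = ketbra (A *v x) y"
  by (simp add: ketbra_def matrix_vector_mult_def matrix_matrix_mult_def vec_eq_iff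
      sum_distrib_right sum_distrib_left mult_ac)

lemma ketbra_mat: "ketbra x y ** A = ketbra x (adj A *v y)"
  by (simp add: ketbra_def adj_def matrix_vector_mult_def matrix_matrix_mult_def vec_eq_iff
      sum_distrib_left mult_ac)

lemma trace_ketbra: "trace (ketbra x y) = braket y x"
  by (simp add: trace_def ketbra_def braket_def mult.commute)

lemma adj_ketbra: "adj (ketbra x y) = ketbra y x"
  by (simp add: adj_def ketbra_def vec_eq_iff)

lemma cnj_braket: "cnj (braket x y) = braket y x"
  by (simp add: braket_def mult.commute)

lemma braket_add_right: "braket x (y + z) = braket x y + braket x z"
  by (simp add: braket_def algebra_simps sum.distrib)

lemma braket_add_left: "braket (x + y) z = braket x z + braket y z"
  by (simp add: braket_def algebra_simps sum.distrib)

lemma braket_diff_right: "braket x (y - z) = braket x y - braket x z"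
  by (simp add: braket_def algebra_simps sum_subtractf)

lemma braket_diff_left: "braket (x - y) z = braket x z - braket y z"
  by (simp add: braket_def algebra_simps sum_subtractf)

lemma braket_smult_right: "braket x (c *s y) = c * braket x y"
  by (simp add: braket_def sum_distrib_left mult_ac)

lemma braket_smult_left: "braket (c *s x) y = cnj c * braket x y"
  by (simp add: braket_def sum_distrib_left mult_ac)

lemma braket_scaleR_right: "braket x (c *\<^sub>R y) = c * braket x y"
  by (simp add: braket_def sum_distrib_left mult_ac scaleR_complex)

lemma braket_scaleR_left: "braket (c *\<^sub>R x) y = c * braket x y"
  by (simp add: braket_def sum_distrib_left mult_ac scaleR_complex)

lemma braket_zero_right [simp]: "braket x 0 = 0"
  by (simp add: braket_def)

lemma braket_sum_right: "braket x (sum f S) = (\<Sum>s\<in>S. braket x (f s))"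
  by (induction S rule: infinite_finite_induct) (simp_all add: braket_add_right)

lemma braket_self_eq_norm: "braket x x = complex_of_real (\<Sum>i\<in>UNIV. (cmod (x$i))\<^sup>2)"
  by (simp add: braket_def complex_norm_square[symmetric] mult.commute del: of_real_power)

lemma Re_braket_self_nonneg: "Re (braket x x) \<ge> 0"
  by (simp add: braket_self_eq_norm sum_nonneg)

lemma Re_braket_self_eq_0_iff: "Re (braket x x) = 0 \<longleftrightarrow> x = 0"
  by (simp add: braket_self_eq_norm sum_nonneg_eq_0_iff vec_eq_iff)

lemma bounded_bilinear_ketbra: "bounded_bilinear ketbra"
  unfolding bilinear_conv_bounded_bilinear[symmetric] bilinear_def
  by (auto intro!: linearI simp: ketbra_def vec_eq_iff algebra_simps scaleR_complex)

lemma bounded_bilinear_braket: "bounded_bilinear braket"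
  unfolding bilinear_conv_bounded_bilinear[symmetric] bilinear_def
  by (auto intro!: linearI simp: braket_add_left braket_add_right braket_scaleR_left
      braket_scaleR_right scaleR_complex)

lemma sum_matrix_vector: "(sum f S) *v x = (\<Sum>s\<in>S. f s *v x)"
  by (induction S rule: infinite_finite_induct) (simp_all add: matrix_vector_mult_add_rdistrib)

lemma matrix_mult_sum_right: "A ** (sum f S) = (\<Sum>s\<in>S. A ** f s)"
  by (induction S rule: infinite_finite_induct) (simp_all add: matrix_add_ldistrib)

lemma matrix_add_rdistrib: "((B::'a::semiring_1^'n^'m) + C) ** A = B ** A + C ** A"
  by (simp add: matrix_matrix_mult_def vec_eq_iff distrib_right sum.distrib)

lemma matrix_mult_sum_left: "(sum f S) ** (A::'a::semiring_1^'k^'n) = (\<Sum>s\<in>S. f s ** A)"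
  by (induction S rule: infinite_finite_induct) (simp_all add: matrix_add_rdistrib)

lemma trace_sum: "trace (sum (f::_\<Rightarrow>'a::comm_semiring_1^'n^'n) S) = (\<Sum>s\<in>S. trace (f s))"
  by (induction S rule: infinite_finite_induct) (simp_all add: trace_add trace_0[unfolded mat_0])

lemma matrix_vector_mult_smult: "(A::'a::comm_semiring_1^'n^'m) *v (c *s x) = c *s (A *v x)"
  by (simp add: matrix_vector_mult_def vec_eq_iff sum_distrib_left mult_ac)

lemma scaleR_matrix_vector_mult: "(c *\<^sub>R (A::complex^'n^'m)) *v x = c *\<^sub>R (A *v x)"
  by (simp add: matrix_vector_mult_def vec_eq_iff sum_distrib_left mult_ac scaleR_complex)

lemma trace_scaleR: "trace (c *\<^sub>R (A::complex^'n^'n)) = c *\<^sub>R trace A"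
  by (simp add: trace_def scaleR_sum_right)

definition orthonormal_basis :: "('d \<Rightarrow> complex^'d) \<Rightarrow> bool" where
  "orthonormal_basis w \<longleftrightarrow> (\<forall>j k. braket (w j) (w k) = (if j = k then 1 else 0))"

lemma orthonormal_basis_resolution:
  fixes w :: "'d \<Rightarrow> complex^'d"
  assumes "orthonormal_basis w"
  shows "(\<Sum>l\<in>UNIV. ketbra (w l) (w l)) = mat 1"
proof -
  define W :: "complex^'d^'d" where "W = (\<chi> i l. w l $ i)"
  have "adj W ** W = mat 1"
    using assms by (simp add: orthonormal_basis_def W_def adj_def matrix_matrix_mult_def mat_def
        vec_eq_iff braket_def)
  hence "W ** adj W = mat 1" by (simp add: matrix_left_right_inverse)
  moreover have "W ** adj W = (\<Sum>l\<in>UNIV. ketbra (w l) (w l))"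
    by (simp add: W_def adj_def matrix_matrix_mult_def vec_eq_iff ketbra_def sum_component)
  ultimately show ?thesis by simp
qed

lemma orthonormal_basis_expansion:
  assumes "orthonormal_basis w"
  shows "x = (\<Sum>l\<in>UNIV. braket (w l) x *s w l)"
  using arg_cong[OF orthonormal_basis_resolution[OF assms], of "\<lambda>A. A *v x"]
  by (simp add: sum_matrix_vector ketbra_mult_vec)

lemma orthonormal_basis_vec_eq_iff:
  assumes "orthonormal_basis w"
  shows "x = y \<longleftrightarrow> (\<forall>m. braket (w m) x = braket (w m) y)"
  using orthonormal_basis_expansion[OF assms, of x] orthonormal_basis_expansion[OF assms, of y]
  by auto

lemma orthonormal_basis_mat_eq:
  assumes "orthonormal_basis w" and "\<And>m l. braket (w m) (A *v w l) = braket (w m) (B *v w l)"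
  shows "A = B"
proof -
  have "A *v w l = B *v w l" for l
    using assms by (simp add: orthonormal_basis_vec_eq_iff)
  hence "A ** (\<Sum>l\<in>UNIV. ketbra (w l) (w l)) = B ** (\<Sum>l\<in>UNIV. ketbra (w l) (w l))"
    by (simp add: matrix_mult_sum_right mat_ketbra)
  thus ?thesis by (simp add: orthonormal_basis_resolution[OF assms(1)])
qed

text \<open>\<open>mixture_deriv v a\<close> is the derivative of \<open>mixture v\<close> when the \<open>v\<^sub>l\<close> move with
  velocities \<open>a\<^sub>l\<close>.\<close>

definition mixture :: "('i \<Rightarrow> complex^'d) \<Rightarrow> complex^'d^'d" where
  "mixture v = (\<Sum>l\<in>UNIV. ketbra (v l) (v l))"

definition mixture_deriv :: "('i \<Rightarrow> complex^'d) \<Rightarrow> ('i \<Rightarrow> complex^'d) \<Rightarrow> complex^'d^'d" where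
  "mixture_deriv v a = (\<Sum>l\<in>UNIV. ketbra (a l) (v l) + ketbra (v l) (a l))"

lemma adj_mixture: "adj (mixture v) = mixture v"
  by (simp add: mixture_def adj_sum adj_ketbra)

lemma adj_mixture_deriv: "adj (mixture_deriv v a) = mixture_deriv v a"
  by (simp add: mixture_deriv_def adj_sum adj_add adj_ketbra add.commute)

lemma trace_sandwich_mixture:
  assumes "adj L' = L'"
  shows "trace (L ** mixture v ** L') = (\<Sum>l\<in>UNIV. braket (L' *v v l) (L *v v l))"
  by (simp add: mixture_def matrix_mult_sum_right matrix_mult_sum_left trace_sum mat_ketbra
      ketbra_mat trace_ketbra assms)

text \<open>The square completes because the SLD equation gives
  \<open>Re tr(L\<rho>L) = Re tr(\<partial>\<rho> L) = 2 \<Sum> Re \<langle>L v\<^sub>l|a\<^sub>l\<rangle>\<close>.\<close>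

lemma SLD_defect_identity:
  assumes "is_SLD (mixture v) (mixture_deriv v a) L"
  shows "(\<Sum>l\<in>UNIV. Re (braket (L *v v l - 2 *\<^sub>R a l) (L *v v l - 2 *\<^sub>R a l)))
       = 4 * (\<Sum>l\<in>UNIV. Re (braket (a l) (a l))) - Re (trace (L ** mixture v ** L))"
proof -
  have herm: "adj L = L"
    and sld: "mixture_deriv v a = (1/2::real) *\<^sub>R (mixture v ** L + L ** mixture v)"
    using assms by (auto simp: is_SLD_def hermitian_def)
  have "trace (mixture_deriv v a ** L)
      = (1/2::real) *\<^sub>R (trace (mixture v ** L ** L) + trace (L ** mixture v ** L))"
    by (simp add: sld scalar_matrix_assoc[symmetric] matrix_add_rdistrib trace_scaleR trace_add)
  also have "trace (mixture v ** L ** L) = trace (L ** mixture v ** L)"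
    by (metis trace_mul_sym matrix_mul_assoc)
  finally have "trace (L ** mixture v ** L) = trace (mixture_deriv v a ** L)"
    by (simp add: scaleR_complex)
  also have "\<dots> = (\<Sum>l\<in>UNIV. braket (L *v v l) (a l) + braket (L *v a l) (v l))"
    by (simp add: mixture_deriv_def matrix_mult_sum_left matrix_add_rdistrib trace_sum trace_add
        ketbra_mat trace_ketbra herm)
  also have "\<dots> = (\<Sum>l\<in>UNIV. braket (L *v v l) (a l) + cnj (braket (L *v v l) (a l)))"
    by (simp add: cnj_braket braket_hermitian[OF herm])
  finally have cross:
      "Re (trace (L ** mixture v ** L)) = (\<Sum>l\<in>UNIV. 2 * Re (braket (L *v v l) (a l)))"
    by (simp add: Re_sum)
  have square: "Re (trace (L ** mixture v ** L)) = (\<Sum>l\<in>UNIV. Re (braket (L *v v l) (L *v v l)))"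
    by (simp add: trace_sandwich_mixture[OF herm] Re_sum)
  have expand: "Re (braket (L *v v l - 2 *\<^sub>R a l) (L *v v l - 2 *\<^sub>R a l))
      = 4 * Re (braket (a l) (a l)) - 4 * Re (braket (L *v v l) (a l))
        + Re (braket (L *v v l) (L *v v l))" for l
  proof -
    have "Re (braket (a l) (L *v v l)) = Re (braket (L *v v l) (a l))"
      by (metis cnj.sel(1) cnj_braket)
    then show ?thesis
      by (simp add: braket_diff_left braket_diff_right braket_scaleR_left braket_scaleR_right)
  qed
  have "(\<Sum>l\<in>UNIV. Re (braket (L *v v l - 2 *\<^sub>R a l) (L *v v l - 2 *\<^sub>R a l)))
      = 4 * (\<Sum>l\<in>UNIV. Re (braket (a l) (a l))) - 2 * (\<Sum>l\<in>UNIV. 2 * Re (braket (L *v v l) (a l)))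
        + (\<Sum>l\<in>UNIV. Re (braket (L *v v l) (L *v v l)))"
    unfolding expand sum.distrib sum_subtractf sum_distrib_left by simp
  then show ?thesis
    using cross square by linarith
qed

lemma SLD_bound_attained_iff:
  fixes v a :: "'i::finite \<Rightarrow> complex^'d"
  assumes "is_SLD (mixture v) (mixture_deriv v a) L"
  shows "Re (trace (L ** mixture v ** L)) = 4 * (\<Sum>l\<in>UNIV. Re (braket (a l) (a l)))
     \<longleftrightarrow> (\<forall>l. L *v v l = 2 *\<^sub>R a l)"
proof -
  have "Re (trace (L ** mixture v ** L)) = 4 * (\<Sum>l\<in>UNIV. Re (braket (a l) (a l)))
     \<longleftrightarrow> (\<Sum>l\<in>UNIV. Re (braket (L *v v l - 2 *\<^sub>R a l) (L *v v l - 2 *\<^sub>R a l))) = 0"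
    using SLD_defect_identity[OF assms] by linarith
  also have "\<dots> \<longleftrightarrow> (\<forall>l. L *v v l - 2 *\<^sub>R a l = 0)"
    by (simp add: sum_nonneg_eq_0_iff Re_braket_self_nonneg Re_braket_self_eq_0_iff)
  finally show ?thesis by simp
qed

locale faithful_ensemble =
  fixes w :: "'d \<Rightarrow> complex^'d" and s :: "'d \<Rightarrow> real" and v :: "'d \<Rightarrow> complex^'d"
  assumes orthonormal: "orthonormal_basis w"
    and s_pos: "\<And>l. s l > 0"
    and v_eq: "\<And>l. v l = complex_of_real (s l) *s w l"
begin

lemma braket_w_w: "braket (w m) (w l) = (if m = l then 1 else 0)"
  using orthonormal by (simp add: orthonormal_basis_def)

lemma braket_v_w: "braket (v m) (w l) = (if m = l then complex_of_real (s l) else 0)"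
  by (simp add: v_eq braket_smult_left braket_w_w)

lemma braket_w_v: "braket (w m) (v l) = (if m = l then complex_of_real (s l) else 0)"
  by (simp add: v_eq braket_smult_right braket_w_w)

lemma mixture_eigenvector: "mixture v *v w l = complex_of_real ((s l)\<^sup>2) *s w l"
proof -
  have "mixture v *v w l = (\<Sum>k\<in>UNIV. braket (v k) (w l) *s v k)"
    by (simp add: mixture_def sum_matrix_vector ketbra_mult_vec)
  also have "\<dots> = complex_of_real (s l) *s v l"
    by (simp add: braket_v_w if_distrib[of "\<lambda>c. c *s _"] cong: if_cong)
  finally show ?thesis by (simp add: v_eq power2_eq_square)
qed

lemma anticommutator_entry:
  "braket (w m) ((mixture v ** L + L ** mixture v) *v w l)
     = complex_of_real ((s m)\<^sup>2 + (s l)\<^sup>2) * braket (w m) (L *v w l)"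
proof -
  have "braket (w m) ((mixture v ** L) *v w l) = complex_of_real ((s m)\<^sup>2) * braket (w m) (L *v w l)"
    by (simp add: matrix_vector_mul_assoc[symmetric] braket_adj[of "w m" "mixture v"] adj_mixture
        mixture_eigenvector braket_smult_left)
  moreover have "braket (w m) ((L ** mixture v) *v w l)
      = complex_of_real ((s l)\<^sup>2) * braket (w m) (L *v w l)"
    by (simp add: matrix_vector_mul_assoc[symmetric] mixture_eigenvector matrix_vector_mult_smult
        braket_smult_right)
  ultimately show ?thesis
    by (simp add: matrix_vector_mult_add_rdistrib braket_add_right algebra_simps)
qed

lemma mixture_deriv_entry:
  "braket (w m) (mixture_deriv v a *v w l)
     = complex_of_real (s l) * braket (w m) (a l) + complex_of_real (s m) * braket (a m) (w l)"
proof -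
  have "braket (w m) (mixture_deriv v a *v w l)
      = (\<Sum>k\<in>UNIV. braket (v k) (w l) * braket (w m) (a k) + braket (a k) (w l) * braket (w m) (v k))"
    by (simp add: mixture_deriv_def sum_matrix_vector ketbra_mult_vec matrix_vector_mult_add_rdistrib
        braket_sum_right braket_add_right braket_smult_right)
  then show ?thesis
    by (simp add: braket_v_w braket_w_v if_distrib[of "\<lambda>c. c * _"] if_distrib[of "\<lambda>c. _ * c"]
        sum.distrib mult.commute cong: if_cong)
qed

lemma SLD_matrix_entry:
  assumes "is_SLD (mixture v) (mixture_deriv v a) L"
  shows "complex_of_real (((s m)\<^sup>2 + (s l)\<^sup>2) / 2) * braket (w m) (L *v w l)
       = complex_of_real (s l) * braket (w m) (a l) + complex_of_real (s m) * braket (a m) (w l)"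
  using arg_cong[OF conjunct2[OF assms[unfolded is_SLD_def]], of "\<lambda>A. braket (w m) (A *v w l)"]
  by (simp add: scaleR_matrix_vector_mult braket_scaleR_right anticommutator_entry
      mixture_deriv_entry)

lemma sum_squares_pos: "(s m)\<^sup>2 + (s l)\<^sup>2 > 0"
  using s_pos[of m] by (simp add: add_pos_nonneg)

lemma SLD_exists: "\<exists>L. is_SLD (mixture v) (mixture_deriv v a) L"
proof -
  define X where
    "X m l = 2 * braket (w m) (mixture_deriv v a *v w l) / complex_of_real ((s m)\<^sup>2 + (s l)\<^sup>2)"
    for m l
  \<comment> \<open>the SLD written in the eigenbasis \<open>w\<close> of \<open>\<rho>\<close>, with eigenvalues \<open>s\<^sub>l\<^sup>2\<close>\<close>
  define L where "L = (\<Sum>m\<in>UNIV. \<Sum>l\<in>UNIV. ketbra (X m l *s w m) (w l))"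
  have "L *v w l = (\<Sum>m\<in>UNIV. X m l *s w m)" for l
    by (simp add: L_def sum_matrix_vector ketbra_mult_vec braket_w_w if_distrib[of "\<lambda>c. c * _"]
        if_distrib[of "\<lambda>c. c *s _"] cong: if_cong)
  then have L_entry: "braket (w m) (L *v w l) = X m l" for m l
    by (simp add: braket_sum_right braket_smult_right braket_w_w if_distrib[of "\<lambda>c. _ * c"]
        cong: if_cong)
  have "adj L = L"
  proof (rule orthonormal_basis_mat_eq[OF orthonormal])
    fix m l
    have "braket (w m) (adj L *v w l) = cnj (braket (w l) (L *v w m))"
      by (simp add: braket_adj[of "w m" "adj L"] cnj_braket)
    also have "\<dots> = cnj (X l m)"
      by (simp add: L_entry)
    also have "\<dots> = X m l"
      by (simp add: X_def cnj_braket braket_hermitian[OF adj_mixture_deriv] add.commute)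
    finally show "braket (w m) (adj L *v w l) = braket (w m) (L *v w l)"
      by (simp add: L_entry)
  qed
  moreover have "mixture_deriv v a = (1/2::real) *\<^sub>R (mixture v ** L + L ** mixture v)"
  proof (rule orthonormal_basis_mat_eq[OF orthonormal])
    fix m l
    have "complex_of_real ((s m)\<^sup>2 + (s l)\<^sup>2) \<noteq> 0"
      using sum_squares_pos[of m l] by (simp only: of_real_eq_0_iff)
    then show "braket (w m) (mixture_deriv v a *v w l)
        = braket (w m) (((1/2::real) *\<^sub>R (mixture v ** L + L ** mixture v)) *v w l)"
      by (simp add: scaleR_matrix_vector_mult braket_scaleR_right anticommutator_entry L_entry X_def
          del: of_real_add of_real_power)
  qed
  ultimately show ?thesis
    unfolding is_SLD_def hermitian_def by blast
qed

lemma SLD_maps_iff_hermitian: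
  assumes sld: "is_SLD (mixture v) (mixture_deriv v a) L"
  shows "(\<forall>l. L *v v l = 2 *\<^sub>R a l) \<longleftrightarrow> (\<forall>m l. braket (v m) (a l) = braket (a m) (v l))"
proof
  have herm: "adj L = L"
    using sld by (simp add: is_SLD_def hermitian_def)
  assume L_v: "\<forall>l. L *v v l = 2 *\<^sub>R a l"
  show "\<forall>m l. braket (v m) (a l) = braket (a m) (v l)"
  proof (intro allI)
    fix m l
    have "2 * braket (v m) (a l) = braket (v m) (L *v v l)"
      by (simp add: L_v braket_scaleR_right)
    also have "\<dots> = braket (L *v v m) (v l)"
      by (simp add: braket_hermitian[OF herm])
    also have "\<dots> = 2 * braket (a m) (v l)"
      by (simp add: L_v braket_scaleR_left)
    finally show "braket (v m) (a l) = braket (a m) (v l)" by simp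
  qed
next
  assume herm_va: "\<forall>m l. braket (v m) (a l) = braket (a m) (v l)"
  show "\<forall>l. L *v v l = 2 *\<^sub>R a l"
  proof (intro allI)
    fix l
    show "L *v v l = 2 *\<^sub>R a l"
      unfolding orthonormal_basis_vec_eq_iff[OF orthonormal]
    proof
      fix m
      define S where "S = complex_of_real (((s m)\<^sup>2 + (s l)\<^sup>2) / 2)"
      have swap:
          "complex_of_real (s m) * braket (w m) (a l) = complex_of_real (s l) * braket (a m) (w l)"
        using herm_va by (simp add: v_eq braket_smult_left braket_smult_right)
      have "S * (complex_of_real (s l) * braket (w m) (L *v w l))
          = complex_of_real (s l) * (complex_of_real (s l) * braket (w m) (a l)
              + complex_of_real (s m) * braket (a m) (w l))"
        using SLD_matrix_entry[OF sld, of m l] by (simp add: S_def ac_simps)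
      also have "\<dots> = S * (2 * braket (w m) (a l))"
        using swap by (simp add: S_def algebra_simps power2_eq_square)
      finally have
          "S * (complex_of_real (s l) * braket (w m) (L *v w l)) = S * (2 * braket (w m) (a l))" .
      moreover have "S \<noteq> 0"
        unfolding S_def of_real_eq_0_iff using sum_squares_pos[of m l]
        by (metis half_gt_zero less_irrefl)
      ultimately have "complex_of_real (s l) * braket (w m) (L *v w l) = 2 * braket (w m) (a l)"
        by simp
      then show "braket (w m) (L *v v l) = braket (w m) (2 *\<^sub>R a l)"
        by (simp add: v_eq matrix_vector_mult_smult braket_smult_right braket_scaleR_right)
    qed
  qed
qed

text \<open>Here \<open>dw\<^sub>l\<close> and \<open>a\<^sub>l\<close> are the velocities of \<open>w\<^sub>l\<close> and \<open>v\<^sub>l\<close>; the three hypotheses are the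
  derivatives of \<open>\<langle>w\<^sub>m|w\<^sub>l\<rangle> = \<delta>\<^sub>m\<^sub>l\<close>, of \<open>\<langle>w\<^sub>m|v\<^sub>l\<rangle> = 0\<close> for \<open>m \<noteq> l\<close> and of \<open>Im \<langle>w\<^sub>l|v\<^sub>l\<rangle> = 0\<close>.\<close>

lemma hermitian_iff_frame_stationary:
  assumes anti: "\<And>m l. braket (w m) (dw l) + braket (dw m) (w l) = 0"
    and off: "\<And>m l. m \<noteq> l \<Longrightarrow> braket (w m) (a l) + braket (dw m) (v l) = 0"
    and diag: "\<And>l. Im (braket (w l) (a l) + braket (dw l) (v l)) = 0"
  shows "(\<forall>m l. braket (v m) (a l) = braket (a m) (v l)) \<longleftrightarrow> (\<forall>l. dw l = 0)"
proof -
  define c where "c m l = braket (dw m) (w l)" for m l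
  have c_anti: "cnj (c l m) = - c m l" for m l
    using anti[of m l] by (simp add: c_def cnj_braket eq_neg_iff_add_eq_0)
  have off_entry: "braket (v m) (a l) = - complex_of_real (s m * s l) * c m l" if "m \<noteq> l" for m l
  proof -
    have "braket (v m) (a l) = complex_of_real (s m) * braket (w m) (a l)"
      by (simp add: v_eq braket_smult_left)
    also have "\<dots> = - complex_of_real (s m) * braket (dw m) (v l)"
      using off[OF that] by (simp add: eq_neg_iff_add_eq_0 flip: distrib_left)
    finally show ?thesis
      by (simp add: v_eq braket_smult_right c_def)
  qed
  have hermitian_off: "braket (v m) (a l) = braket (a m) (v l) \<longleftrightarrow> c m l = 0"
    if "m \<noteq> l" for m l
  proof -
    have "braket (a m) (v l) = cnj (braket (v l) (a m))"
      by (simp add: cnj_braket)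
    also have "\<dots> = complex_of_real (s m * s l) * c m l"
      using that by (simp add: off_entry c_anti)
    finally have "braket (a m) (v l) = complex_of_real (s m * s l) * c m l" .
    moreover have "s m * s l \<noteq> 0"
      using s_pos[of m] s_pos[of l] by simp
    ultimately show ?thesis
      using that by (auto simp: off_entry)
  qed
  have hermitian_diag: "braket (v l) (a l) = braket (a l) (v l) \<longleftrightarrow> c l l = 0" for l
  proof -
    have "Im (braket (v l) (a l)) = s l * Im (braket (w l) (a l))"
      by (simp add: v_eq braket_smult_left)
    also have "\<dots> = - s l * Im (braket (dw l) (v l))"
      using diag[of l] by (simp add: eq_neg_iff_add_eq_0 flip: distrib_left)
    also have "\<dots> = - (s l)\<^sup>2 * Im (c l l)"
      by (simp add: v_eq braket_smult_right c_def power2_eq_square)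
    finally have Im_va: "Im (braket (v l) (a l)) = - (s l)\<^sup>2 * Im (c l l)" .
    have "Re (c l l) = 0"
      using c_anti[of l l] by (simp add: complex_eq_iff)
    moreover have "braket (v l) (a l) = braket (a l) (v l) \<longleftrightarrow> Im (braket (v l) (a l)) = 0"
      by (metis cnj_braket Reals_cnj_iff complex_is_Real_iff)
    ultimately show ?thesis
      using s_pos[of l] Im_va by (simp add: complex_eq_iff)
  qed
  have "braket (v m) (a l) = braket (a m) (v l) \<longleftrightarrow> braket (w l) (dw m) = 0" for m l
  proof -
    have "c m l = 0 \<longleftrightarrow> braket (w l) (dw m) = 0"
      unfolding c_def by (metis cnj_braket complex_cnj_zero_iff)
    then show ?thesis
      using hermitian_off[of m l] hermitian_diag[of l] by (cases "m = l") simp_all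
  qed
  then show ?thesis
    by (simp add: orthonormal_basis_vec_eq_iff[OF orthonormal, of "dw _" 0])
qed

end


lemma braket_derivative_vanishes:
  fixes f g :: "'a::real_normed_vector \<Rightarrow> complex^'d" and F :: "complex \<Rightarrow> 'c::real_normed_vector"
  assumes "(f has_derivative f') (at x)" and "(g has_derivative g') (at x)"
    and "open S" and "x \<in> S" and "bounded_linear F"
    and "\<And>y. y \<in> S \<Longrightarrow> F (braket (f y) (g y)) = c"
  shows "F (braket (f x) (g' h) + braket (f' h) (g x)) = 0"
proof -
  have "((\<lambda>y. F (braket (f y) (g y))) has_derivative
      (\<lambda>h. F (braket (f x) (g' h) + braket (f' h) (g x)))) (at x)"
    using bounded_linear.has_derivative[OF assms(5) bounded_bilinear.FDERIV[OF bounded_bilinear_braket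
          assms(1,2)]] .
  moreover have "((\<lambda>y. F (braket (f y) (g y))) has_derivative (\<lambda>h. 0)) (at x)"
    by (rule has_derivative_transform_within_open[of "\<lambda>y. c" _ _ _ S]) (use assms in auto)
  ultimately have "(\<lambda>h. F (braket (f x) (g' h) + braket (f' h) (g x))) = (\<lambda>h. 0)"
    by (rule has_derivative_unique)
  then show ?thesis
    by (rule fun_cong)
qed

lemma pderiv_eq_0_iff_constant_on:
  fixes f :: "real^'p \<Rightarrow> 'b::banach"
  assumes "open S" and "connected S" and "\<And>x. x \<in> S \<Longrightarrow> f differentiable (at x)"
  shows "(\<forall>x\<in>S. \<forall>j. pderiv f x j = 0) \<longleftrightarrow> (\<forall>x\<in>S. \<forall>y\<in>S. f x = f y)"
proof
  assume pderiv_0: "\<forall>x\<in>S. \<forall>j. pderiv f x j = 0"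
  have "(f has_derivative (\<lambda>h. 0)) (at x within S)" if "x \<in> S" for x
  proof -
    have deriv: "(f has_derivative frechet_derivative f (at x)) (at x)"
      using assms(3)[OF that] by (simp add: frechet_derivative_works)
    have "frechet_derivative f (at x) = (\<lambda>h. 0)"
    proof (rule linear_eq_stdbasis)
      show "linear (frechet_derivative f (at x))"
        using deriv by (rule has_derivative_linear)
      fix b :: "real^'p"
      assume "b \<in> Basis"
      then obtain j where "b = axis j 1"
        by (auto simp: Basis_vec_def)
      then show "frechet_derivative f (at x) b = 0"
        using pderiv_0 that by (simp add: pderiv_def)
    qed (simp add: linear_zero)
    then show ?thesis
      using has_derivative_at_withinI[OF deriv] by simp
  qed
  moreover have "continuous_on S f"
    by (rule differentiable_imp_continuous_on)
      (use assms(3) in \<open>auto simp: differentiable_on_def intro: differentiable_at_withinI\<close>)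
  ultimately have "f constant_on S"
    using has_derivative_zero_connected_constant_on[OF assms(2,1) finite.emptyI] by blast
  then show "\<forall>x\<in>S. \<forall>y\<in>S. f x = f y"
    by (auto simp: constant_on_def)
next
  assume const: "\<forall>x\<in>S. \<forall>y\<in>S. f x = f y"
  show "\<forall>x\<in>S. \<forall>j. pderiv f x j = 0"
  proof (intro ballI allI)
    fix x j
    assume "x \<in> S"
    have "((\<lambda>y. f x) has_derivative (\<lambda>h. 0)) (at x)"
      by simp
    then have "(f has_derivative (\<lambda>h. 0)) (at x)"
      by (rule has_derivative_transform_within_open[OF _ assms(1) \<open>x \<in> S\<close>])
        (use const \<open>x \<in> S\<close> in blast)
    then show "pderiv f x j = 0"
      by (simp add: pderiv_def frechet_derivative_at[symmetric])
  qed
qed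

locale pure_input_channel =
  fixes \<Theta> :: "(real^'p) set"
    and Ups :: "'d \<Rightarrow> real^'p \<Rightarrow> complex^'d^'d"
    and psi0 :: "complex^'d"
    and w :: "'d \<Rightarrow> real^'p \<Rightarrow> complex^'d"
    and p :: "'d \<Rightarrow> real^'p \<Rightarrow> real"
  assumes open_Theta: "open \<Theta>"
    and Ups_diff: "\<And>k \<theta>. \<theta> \<in> \<Theta> \<Longrightarrow> Ups k differentiable (at \<theta>)"
    and Ups_psi0: "\<And>k \<theta>. \<theta> \<in> \<Theta> \<Longrightarrow>
          Ups k \<theta> *v psi0 = complex_of_real (sqrt (p k \<theta>)) *s w k \<theta>"
    and w_orthonormal: "\<And>j k \<theta>. \<theta> \<in> \<Theta> \<Longrightarrow>
          braket (w j \<theta>) (w k \<theta>) = (if j = k then 1 else 0)"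
    and w_diff: "\<And>k \<theta>. \<theta> \<in> \<Theta> \<Longrightarrow> w k differentiable (at \<theta>)"
    and p_pos: "\<And>j \<theta>. \<theta> \<in> \<Theta> \<Longrightarrow> p j \<theta> > 0"
begin

abbreviation rho :: "real^'p \<Rightarrow> complex^'d^'d" where
  "rho \<equiv> channel_out Ups (ketbra psi0 psi0)"

definition amp :: "real^'p \<Rightarrow> 'd \<Rightarrow> complex^'d" where
  "amp \<theta> l = Ups l \<theta> *v psi0"

definition vel :: "real^'p \<Rightarrow> 'p \<Rightarrow> 'd \<Rightarrow> complex^'d" where
  "vel \<theta> j l = pderiv (Ups l) \<theta> j *v psi0"

definition sld :: "real^'p \<Rightarrow> 'p \<Rightarrow> complex^'d^'d" where
  "sld \<theta> j = (SOME L. is_SLD (rho \<theta>) (pderiv rho \<theta> j) L)"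

lemma rho_eq_mixture: "rho \<theta> = mixture (amp \<theta>)"
  by (simp add: channel_out_def mixture_def amp_def mat_ketbra ketbra_mat)

lemma faithful_ensemble_at:
  "\<theta> \<in> \<Theta> \<Longrightarrow> faithful_ensemble (\<lambda>l. w l \<theta>) (\<lambda>l. sqrt (p l \<theta>)) (amp \<theta>)"
  by unfold_locales (simp_all add: orthonormal_basis_def w_orthonormal p_pos amp_def Ups_psi0)

lemma amp_has_derivative:
  assumes "\<theta> \<in> \<Theta>"
  shows "((\<lambda>\<theta>. amp \<theta> l) has_derivative (\<lambda>h. frechet_derivative (Ups l) (at \<theta>) h *v psi0)) (at \<theta>)"
proof -
  have "bounded_linear (\<lambda>A::complex^'d^'d. A *v psi0)"
    unfolding linear_conv_bounded_linear[symmetric]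
    by (rule linearI) (simp_all add: matrix_vector_mult_add_rdistrib scaleR_matrix_vector_mult)
  from bounded_linear.has_derivative[OF this Ups_diff[OF assms, unfolded frechet_derivative_works]]
  show ?thesis
    by (simp add: amp_def)
qed

lemma pderiv_rho: "\<theta> \<in> \<Theta> \<Longrightarrow> pderiv rho \<theta> j = mixture_deriv (amp \<theta>) (vel \<theta> j)"
  unfolding rho_eq_mixture[abs_def] mixture_def mixture_deriv_def pderiv_def
  by (subst frechet_derivative_at[OF has_derivative_sum[OF bounded_bilinear.FDERIV[OF
          bounded_bilinear_ketbra amp_has_derivative amp_has_derivative]], symmetric])
    (simp_all add: vel_def pderiv_def add.commute)

lemma C_Ups_entry:
  "C_Ups Ups (ketbra psi0 psi0) \<theta> $ j $ k = 4 * (\<Sum>l\<in>UNIV. Re (braket (vel \<theta> k l) (vel \<theta> j l)))"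
  by (simp add: C_Ups_def vel_def mat_ketbra ketbra_mat trace_ketbra)

lemma SLD_QFI_entry: "SLD_QFI rho \<theta> $ j $ k = Re (trace (sld \<theta> j ** rho \<theta> ** sld \<theta> k))"
  by (simp add: SLD_QFI_def sld_def Let_def)

lemma sld_is_SLD:
  "\<theta> \<in> \<Theta> \<Longrightarrow> is_SLD (mixture (amp \<theta>)) (mixture_deriv (amp \<theta>) (vel \<theta> j)) (sld \<theta> j)"
  using someI_ex[OF faithful_ensemble.SLD_exists[OF faithful_ensemble_at]]
  by (simp add: sld_def rho_eq_mixture pderiv_rho)

lemma vel_hermitian_iff_frame_stationary:
  assumes \<theta>: "\<theta> \<in> \<Theta>"
  shows "(\<forall>m l. braket (amp \<theta> m) (vel \<theta> j l) = braket (vel \<theta> j m) (amp \<theta> l))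
     \<longleftrightarrow> (\<forall>l. pderiv (w l) \<theta> j = 0)"
proof -
  define Dw where "Dw l = frechet_derivative (w l) (at \<theta>)" for l
  define DU where "DU l = frechet_derivative (Ups l) (at \<theta>)" for l
  have w_deriv: "(w l has_derivative Dw l) (at \<theta>)" for l
    using w_diff[OF \<theta>] by (simp add: Dw_def frechet_derivative_works)
  note amp_deriv = amp_has_derivative[OF \<theta>, folded DU_def]
  have "(\<forall>m l. braket (amp \<theta> m) (DU l (axis j 1) *v psi0) = braket (DU m (axis j 1) *v psi0) (amp \<theta> l))
     \<longleftrightarrow> (\<forall>l. Dw l (axis j 1) = 0)"
  proof (rule faithful_ensemble.hermitian_iff_frame_stationary[OF faithful_ensemble_at[OF \<theta>]])
    fix m l
    show "braket (w m \<theta>) (Dw l (axis j 1)) + braket (Dw m (axis j 1)) (w l \<theta>) = 0"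
      by (rule braket_derivative_vanishes[OF w_deriv w_deriv open_Theta \<theta> bounded_linear_ident,
            where c = "if m = l then 1 else 0"]) (simp add: w_orthonormal)
  next
    fix m l :: 'd
    assume "m \<noteq> l"
    then show "braket (w m \<theta>) (DU l (axis j 1) *v psi0) + braket (Dw m (axis j 1)) (amp \<theta> l) = 0"
      by (intro braket_derivative_vanishes[OF w_deriv amp_deriv open_Theta \<theta> bounded_linear_ident,
            where c = 0]) (simp add: amp_def Ups_psi0 braket_smult_right w_orthonormal)
  next
    fix l
    show "Im (braket (w l \<theta>) (DU l (axis j 1) *v psi0) + braket (Dw l (axis j 1)) (amp \<theta> l)) = 0"
      by (rule braket_derivative_vanishes[OF w_deriv amp_deriv open_Theta \<theta> bounded_linear_Im,
            where c = 0]) (simp add: amp_def Ups_psi0 braket_smult_right w_orthonormal)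
  qed
  then show ?thesis
    by (simp add: vel_def pderiv_def Dw_def DU_def)
qed

lemma SLD_QFI_diag_eq_iff:
  assumes \<theta>: "\<theta> \<in> \<Theta>"
  shows "SLD_QFI rho \<theta> $ j $ j = C_Ups Ups (ketbra psi0 psi0) \<theta> $ j $ j
     \<longleftrightarrow> (\<forall>l. pderiv (w l) \<theta> j = 0)"
proof -
  have "SLD_QFI rho \<theta> $ j $ j = C_Ups Ups (ketbra psi0 psi0) \<theta> $ j $ j
      \<longleftrightarrow> Re (trace (sld \<theta> j ** mixture (amp \<theta>) ** sld \<theta> j))
            = 4 * (\<Sum>l\<in>UNIV. Re (braket (vel \<theta> j l) (vel \<theta> j l)))"
    by (simp add: SLD_QFI_entry C_Ups_entry rho_eq_mixture)
  also have "\<dots> \<longleftrightarrow> (\<forall>l. sld \<theta> j *v amp \<theta> l = 2 *\<^sub>R vel \<theta> j l)"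
    by (rule SLD_bound_attained_iff[OF sld_is_SLD[OF \<theta>]])
  also have "\<dots> \<longleftrightarrow> (\<forall>m l. braket (amp \<theta> m) (vel \<theta> j l) = braket (vel \<theta> j m) (amp \<theta> l))"
    by (rule faithful_ensemble.SLD_maps_iff_hermitian[OF faithful_ensemble_at[OF \<theta>] sld_is_SLD[OF \<theta>]])
  also have "\<dots> \<longleftrightarrow> (\<forall>l. pderiv (w l) \<theta> j = 0)"
    by (rule vel_hermitian_iff_frame_stationary[OF \<theta>])
  finally show ?thesis .
qed

lemma SLD_QFI_eq_C_Ups_if_stationary:
  assumes \<theta>: "\<theta> \<in> \<Theta>" and stationary: "\<And>j l. pderiv (w l) \<theta> j = 0"
  shows "SLD_QFI rho \<theta> = C_Ups Ups (ketbra psi0 psi0) \<theta>"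
proof -
  have sld_amp: "sld \<theta> j *v amp \<theta> l = 2 *\<^sub>R vel \<theta> j l" for j l
    using faithful_ensemble.SLD_maps_iff_hermitian[OF faithful_ensemble_at[OF \<theta>] sld_is_SLD[OF \<theta>]]
      vel_hermitian_iff_frame_stationary[OF \<theta>] stationary
    by blast
  have herm: "adj (sld \<theta> k) = sld \<theta> k" for k
    using sld_is_SLD[OF \<theta>] by (simp add: is_SLD_def hermitian_def)
  show ?thesis
    by (simp add: vec_eq_iff SLD_QFI_entry C_Ups_entry rho_eq_mixture trace_sandwich_mixture[OF herm]
        sld_amp braket_scaleR_left braket_scaleR_right sum_distrib_left)
qed

end

theorem lemma2p10:
  fixes \<Theta> :: "(real^'p) set"
    and Ups :: "'d \<Rightarrow> real^'p \<Rightarrow> complex^'d^'d"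
    and psi0 :: "complex^'d"
    and w :: "'d \<Rightarrow> real^'p \<Rightarrow> complex^'d"
    and p :: "'d \<Rightarrow> real^'p \<Rightarrow> real"
  assumes open_Theta: "open \<Theta>" and conn_Theta: "connected \<Theta>"
    and psi0_unit: "braket psi0 psi0 = 1"
    and Ups_diff: "\<And>k \<theta>. \<theta> \<in> \<Theta> \<Longrightarrow> Ups k differentiable (at \<theta>)"
    and Ups_complete: "\<And>\<theta>. \<theta> \<in> \<Theta> \<Longrightarrow> (\<Sum>k\<in>UNIV. adj (Ups k \<theta>) ** Ups k \<theta>) = mat 1"
    and Ups_canonical: "\<And>j k \<theta>. \<theta> \<in> \<Theta> \<Longrightarrow>
          trace (Ups k \<theta> ** ketbra psi0 psi0 ** adj (Ups j \<theta>))
            = (if j = k then complex_of_real (p k \<theta>) else 0)"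
    and Ups_psi0: "\<And>k \<theta>. \<theta> \<in> \<Theta> \<Longrightarrow>
          Ups k \<theta> *v psi0 = complex_of_real (sqrt (p k \<theta>)) *s w k \<theta>"
    and w_orthonormal: "\<And>j k \<theta>. \<theta> \<in> \<Theta> \<Longrightarrow>
          braket (w j \<theta>) (w k \<theta>) = (if j = k then 1 else 0)"
    and w_diff: "\<And>k \<theta>. \<theta> \<in> \<Theta> \<Longrightarrow> w k differentiable (at \<theta>)"
    and p_pos: "\<And>j \<theta>. \<theta> \<in> \<Theta> \<Longrightarrow> p j \<theta> > 0"
  shows "(\<forall>\<theta>\<in>\<Theta>. SLD_QFI (channel_out Ups (ketbra psi0 psi0)) \<theta> = C_Ups Ups (ketbra psi0 psi0) \<theta>)
     \<longleftrightarrow> (\<forall>k. \<forall>\<theta>\<in>\<Theta>. \<forall>\<theta>'\<in>\<Theta>. w k \<theta> = w k \<theta>')"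
proof -
  interpret pure_input_channel \<Theta> Ups psi0 w p
    by unfold_locales (fact open_Theta Ups_diff Ups_psi0 w_orthonormal w_diff p_pos)+
  have "(\<forall>\<theta>\<in>\<Theta>. SLD_QFI rho \<theta> = C_Ups Ups (ketbra psi0 psi0) \<theta>)
      \<longleftrightarrow> (\<forall>\<theta>\<in>\<Theta>. \<forall>j. SLD_QFI rho \<theta> $ j $ j = C_Ups Ups (ketbra psi0 psi0) \<theta> $ j $ j)"
    using SLD_QFI_diag_eq_iff SLD_QFI_eq_C_Ups_if_stationary by metis
  also have "\<dots> \<longleftrightarrow> (\<forall>l. \<forall>\<theta>\<in>\<Theta>. \<forall>j. pderiv (w l) \<theta> j = 0)"
    using SLD_QFI_diag_eq_iff by blast
  also have "\<dots> \<longleftrightarrow> (\<forall>l. \<forall>\<theta>\<in>\<Theta>. \<forall>\<theta>'\<in>\<Theta>. w l \<theta> = w l \<theta>')"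
    using pderiv_eq_0_iff_constant_on[OF open_Theta conn_Theta w_diff] by blast
  finally show ?thesis .
qed

end
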